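(* Let $\mathbb{F}$ be a field, $\sigma$ a field automorphism of $\mathbb{F}$ of finite order $m$, $\delta=0$, and $K=\{\beta\in\mathbb{F}:\sigma(\beta)=\beta\}$. A vector $(a_1,\dots,a_r)\in\mathbb{F}^r$ is a $(\sigma,\delta)$-multiplicity sequence if and only if either $a_1=\dots=a_r=0$, or $a_1\ne0$ and for each $i=1,\dots,r-1$ there is $\beta_i\in\mathbb{F}^*$ with $$a_{i+1}=\sigma(\beta_i)\beta_i^{-1}a_i\quad\text{and}\quad \mathrm{T}_{\mathbb{F}/K}(\beta_ia_i^{-1})\ne0.$$ In particular, for $a\ne0$, $(a,\dots,a)\in\mathbb{F}^r$ ($r\ge2$) is a $(\sigma,\delta)$-multiplicity sequence if and only if $\mathrm{T}_{\mathbb{F}/K}(a^{-1})\ne0$.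
   Context: $\mathbb{F}[x;\sigma,0]$ is the skew polynomial ring with $xa=\sigma(a)x$. $\mathrm{T}_{\mathbb{F}/K}(a)=\sum_{i=0}^{m-1}\sigma^i(a)$. For $\mathbf a=(a_1,\dots,a_r)$, $P_{\mathbf a}=(x-a_r)\cdots(x-a_1)$; $\mathbf a$ is a $(\sigma,\delta)$-multiplicity sequence if $a_1$ is the only $b\in\mathbb{F}$ such that $x-b$ divides $P_{\mathbf a}$ on the right. *)

theory Defs
  imports "HOL-Computational_Algebra.Polynomial"
begin

definition field_aut :: "('a::field \<Rightarrow> 'a) \<Rightarrow> bool" where
  "field_aut \<sigma> \<longleftrightarrow> bij \<sigma> \<and> (\<forall>x y. \<sigma> (x + y) = \<sigma> x + \<sigma> y) \<and> (\<forall>x y. \<sigma> (x * y) = \<sigma> x * \<sigma> y)"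

definition aut_order :: "('a \<Rightarrow> 'a) \<Rightarrow> nat \<Rightarrow> bool" where
  "aut_order \<sigma> m \<longleftrightarrow> 0 < m \<and> (\<sigma> ^^ m) = id \<and> (\<forall>k. 0 < k \<and> k < m \<longrightarrow> (\<sigma> ^^ k) \<noteq> id)"

definition trace_aut :: "('a::field \<Rightarrow> 'a) \<Rightarrow> nat \<Rightarrow> 'a \<Rightarrow> 'a" where
  "trace_aut \<sigma> m a = (\<Sum>i<m. (\<sigma> ^^ i) a)"

text \<open>Multiplication in the skew polynomial ring F[x;sigma,0], with x a = sigma(a) x.\<close>
definition skew_mult :: "('a::field \<Rightarrow> 'a) \<Rightarrow> 'a poly \<Rightarrow> 'a poly \<Rightarrow> 'a poly" where
  "skew_mult \<sigma> p q = (\<Sum>i\<le>degree p. monom (coeff p i) i * map_poly (\<sigma> ^^ i) q)"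

text \<open>P_a = (x - a_r) ... (x - a_1) for the list a = [a_1, ..., a_r].\<close>
definition P_seq :: "('a::field \<Rightarrow> 'a) \<Rightarrow> 'a list \<Rightarrow> 'a poly" where
  "P_seq \<sigma> as = foldl (\<lambda>P a. skew_mult \<sigma> [:-a, 1:] P) 1 as"

definition right_lin_dvd :: "('a::field \<Rightarrow> 'a) \<Rightarrow> 'a \<Rightarrow> 'a poly \<Rightarrow> bool" where
  "right_lin_dvd \<sigma> b P \<longleftrightarrow> (\<exists>Q. P = skew_mult \<sigma> Q [:-b, 1:])"

definition mult_seq :: "('a::field \<Rightarrow> 'a) \<Rightarrow> 'a list \<Rightarrow> bool" where
  "mult_seq \<sigma> as \<longleftrightarrow> (\<forall>b. right_lin_dvd \<sigma> b (P_seq \<sigma> as) \<longleftrightarrow> b = hd as)"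

end

theory Submission
  imports Defs
begin

text \<open>Right division by x - b leaves the remainder P(b) (Lam-Leroy evaluation), and
  P_(a @ [c])(b) = \<sigma>(P_a(b)) b - c P_a(b). So appending c to a multiplicity sequence a keeps the
  property exactly when no b with P_a(b) \<noteq> 0 satisfies \<sigma>(P_a(b)) b = c P_a(b). Writing
  b = \<sigma>(x) c x\<inverse>, this asks whether 1 lies in the image of the additive, \<sigma>-semilinear map
  x \<mapsto> x P_a(\<sigma>(x) c x\<inverse>). If c is not \<sigma>-conjugate to the a_i, multiplicative Hilbert 90 makes
  every factor of this map, and hence the map, onto. If a is a chain of multiplicity steps and
  c = \<sigma>(\<beta>) \<beta>\<inverse> a_r, induction along the chain with additive Hilbert 90 identifies the image
  with the kernel of z \<mapsto> T(z \<beta> a_r\<inverse>), so 1 is attained iff T(\<beta> a_r\<inverse>) = 0.\<close>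

lemma field_aut_add: "field_aut f \<Longrightarrow> f (x + y) = f x + f y"
  by (simp add: field_aut_def)

lemma field_aut_mult: "field_aut f \<Longrightarrow> f (x * y) = f x * f y"
  by (simp add: field_aut_def)

lemma field_aut_inj: "field_aut f \<Longrightarrow> inj f"
  by (simp add: field_aut_def bij_is_inj)

lemma field_aut_surj: "field_aut f \<Longrightarrow> surj f"
  by (simp add: field_aut_def bij_is_surj)

lemma field_aut_0: assumes "field_aut f" shows "f 0 = 0"
proof -
  have "f 0 + f 0 = f 0 + 0" using field_aut_add[OF assms, of 0 0] by simp
  then show ?thesis by (rule add_left_imp_eq)
qed

lemma field_aut_eq_0_iff: "field_aut f \<Longrightarrow> f x = 0 \<longleftrightarrow> x = 0"
  using field_aut_inj field_aut_0 by (metis injD)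

lemma field_aut_1: assumes "field_aut f" shows "f 1 = 1"
proof -
  have "f 1 * f 1 = f 1 * 1" using field_aut_mult[OF assms, of 1 1] by simp
  moreover have "f 1 \<noteq> 0" using field_aut_eq_0_iff[OF assms, of 1] by simp
  ultimately show ?thesis by simp
qed

lemma field_aut_uminus: assumes "field_aut f" shows "f (- x) = - f x"
proof -
  have "f x + f (- x) = 0" using field_aut_add[OF assms, of x "- x"] field_aut_0[OF assms] by simp
  then show ?thesis by (simp add: add_eq_0_iff)
qed

lemma field_aut_diff: "field_aut f \<Longrightarrow> f (x - y) = f x - f y"
  using field_aut_add[of f x "- y"] field_aut_uminus[of f y] by simp

lemma field_aut_inverse: assumes "field_aut f" shows "f (inverse x) = inverse (f x)"
proof (cases "x = 0")
  case True
  then show ?thesis using field_aut_0[OF assms] by simp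
next
  case False
  then have "f x * f (inverse x) = 1"
    using field_aut_mult[OF assms, of x "inverse x"] field_aut_1[OF assms] by simp
  then show ?thesis by (rule inverse_unique[symmetric])
qed

lemma field_aut_divide: "field_aut f \<Longrightarrow> f (x / y) = f x / f y"
  by (simp add: divide_inverse field_aut_mult field_aut_inverse)

lemma field_aut_sum: "field_aut f \<Longrightarrow> f (sum g A) = (\<Sum>i\<in>A. f (g i))"
  by (induct A rule: infinite_finite_induct) (simp_all add: field_aut_0 field_aut_add)

lemma field_aut_prod: "field_aut f \<Longrightarrow> f (prod g A) = (\<Prod>i\<in>A. f (g i))"
  by (induct A rule: infinite_finite_induct) (simp_all add: field_aut_1 field_aut_mult)

lemma field_aut_funpow: "field_aut f \<Longrightarrow> field_aut (f ^^ n)"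
  by (induct n) (simp_all add: field_aut_def bij_comp)

lemma sum_lessThan_Suc_shift_eq:
  "(\<Sum>i<m. g (Suc i)) = (\<Sum>i<m. g i) - g 0 + (g m :: 'a::ab_group_add)"
  by (induct m) (simp_all add: algebra_simps)

lemma sum_lessThan_Suc_shift_cyclic:
  "g m = g 0 \<Longrightarrow> (\<Sum>i<m. g (Suc i)) = (\<Sum>i<m. g i :: 'a::ab_group_add)"
  by (simp add: sum_lessThan_Suc_shift_eq)

lemma sum_atMost_add_shift:
  fixes i d :: nat
  shows "(\<Sum>k\<le>i + d. if k < i then 0 else F (k - i)) = (\<Sum>j\<le>d. F j :: 'a::comm_monoid_add)"
proof (induct i arbitrary: F)
  case (Suc i)
  have "(\<Sum>k\<le>Suc i + d. if k < Suc i then 0 else F (k - Suc i))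
      = (\<Sum>k\<le>i + d. if Suc k < Suc i then 0 else F (Suc k - Suc i))"
    by (simp only: add_Suc sum.atMost_Suc_shift) simp
  also have "\<dots> = (\<Sum>k\<le>i + d. if k < i then 0 else F (k - i))"
    by (simp only: diff_Suc_Suc Suc_less_eq)
  finally show ?case using Suc by simp
qed simp

locale field_automorphism =
  fixes \<sigma> :: "'a::field \<Rightarrow> 'a"
  assumes aut: "field_aut \<sigma>"
begin

lemma funpow_aut: "field_aut (\<sigma> ^^ i)"
  by (rule field_aut_funpow[OF aut])

definition trunc_norm :: "nat \<Rightarrow> 'a \<Rightarrow> 'a" where
  "trunc_norm i b = (\<Prod>l<i. (\<sigma> ^^ l) b)"

lemma trunc_norm_0 [simp]: "trunc_norm 0 b = 1"
  by (simp add: trunc_norm_def)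

lemma trunc_norm_Suc: "trunc_norm (Suc i) b = trunc_norm i b * (\<sigma> ^^ i) b"
  by (simp add: trunc_norm_def)

lemma trunc_norm_Suc_left: "trunc_norm (Suc i) b = b * \<sigma> (trunc_norm i b)"
  unfolding trunc_norm_def prod.lessThan_Suc_shift by (simp add: field_aut_prod[OF aut])

lemma trunc_norm_add: "trunc_norm (i + j) b = trunc_norm i b * (\<sigma> ^^ i) (trunc_norm j b)"
proof (induct j)
  case 0
  then show ?case by (simp add: field_aut_1[OF funpow_aut])
next
  case (Suc j)
  then show ?case
    by (simp add: trunc_norm_Suc field_aut_mult[OF funpow_aut] funpow_add ac_simps)
qed

text \<open>The value P(b) in the sense of Lam and Leroy: the remainder of P on right division by x - b.\<close>
definition skew_eval :: "'a \<Rightarrow> 'a poly \<Rightarrow> 'a" where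
  "skew_eval b P = (\<Sum>i\<le>degree P. coeff P i * trunc_norm i b)"

lemma skew_eval_bound: "degree P \<le> n \<Longrightarrow> skew_eval b P = (\<Sum>i\<le>n. coeff P i * trunc_norm i b)"
  unfolding skew_eval_def by (rule sum.mono_neutral_left) (auto simp: coeff_eq_0)

lemma skew_eval_add: "skew_eval b (P + Q) = skew_eval b P + skew_eval b Q"
proof -
  let ?n = "max (degree P) (degree Q)"
  have "degree (P + Q) \<le> ?n" by (rule degree_add_le) auto
  then show ?thesis by (simp add: skew_eval_bound[of _ ?n] sum.distrib distrib_right)
qed

lemma skew_eval_diff: "skew_eval b (P - Q) = skew_eval b P - skew_eval b Q"
  using skew_eval_add[of b P "- Q"] by (simp add: skew_eval_def sum_negf)

lemma skew_eval_0 [simp]: "skew_eval b 0 = 0"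
  by (simp add: skew_eval_def)

lemma skew_eval_sum: "skew_eval b (\<Sum>i\<in>A. F i) = (\<Sum>i\<in>A. skew_eval b (F i))"
  by (induct A rule: infinite_finite_induct) (simp_all add: skew_eval_add)

lemma skew_eval_lin: "skew_eval b [:- b, 1:] = 0"
  by (simp add: skew_eval_def trunc_norm_def)

lemma skew_eval_monom_mult:
  "skew_eval b (monom c i * map_poly (\<sigma> ^^ i) R) = c * trunc_norm i b * (\<sigma> ^^ i) (skew_eval b R)"
proof -
  let ?d = "degree R"
  have "degree (monom c i * map_poly (\<sigma> ^^ i) R) \<le> i + ?d"
    using degree_mult_le[of "monom c i" "map_poly (\<sigma> ^^ i) R"] degree_monom_le[of c i]
      degree_map_poly[of "\<sigma> ^^ i" R] field_aut_eq_0_iff[OF funpow_aut] by simp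
  then have "skew_eval b (monom c i * map_poly (\<sigma> ^^ i) R)
     = (\<Sum>k\<le>i + ?d. if k < i then 0 else c * (\<sigma> ^^ i) (coeff R (k - i)) * trunc_norm (i + (k - i)) b)"
    by (auto simp: skew_eval_bound coeff_monom_mult coeff_map_poly field_aut_0[OF funpow_aut]
        intro!: sum.cong)
  also have "\<dots> = (\<Sum>j\<le>?d. c * (\<sigma> ^^ i) (coeff R j) * trunc_norm (i + j) b)"
    by (rule sum_atMost_add_shift)
  also have "\<dots> = (\<Sum>j\<le>?d. c * trunc_norm i b * (\<sigma> ^^ i) (coeff R j * trunc_norm j b))"
    unfolding trunc_norm_add field_aut_mult[OF funpow_aut] by (simp add: ac_simps)
  finally show ?thesis
    by (simp add: skew_eval_def field_aut_sum[OF funpow_aut] sum_distrib_left)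
qed

lemma skew_eval_skew_mult:
  "skew_eval b (skew_mult \<sigma> Q R) = (\<Sum>i\<le>degree Q. coeff Q i * trunc_norm i b * (\<sigma> ^^ i) (skew_eval b R))"
  unfolding skew_mult_def by (simp add: skew_eval_sum skew_eval_monom_mult)

lemma skew_mult_bound:
  "degree Q \<le> n \<Longrightarrow> skew_mult \<sigma> Q R = (\<Sum>i\<le>n. monom (coeff Q i) i * map_poly (\<sigma> ^^ i) R)"
  unfolding skew_mult_def by (rule sum.mono_neutral_left) (auto simp: coeff_eq_0)

lemma skew_mult_add_left: "skew_mult \<sigma> (Q1 + Q2) R = skew_mult \<sigma> Q1 R + skew_mult \<sigma> Q2 R"
proof -
  let ?n = "max (degree Q1) (degree Q2)"
  have "degree (Q1 + Q2) \<le> ?n" by (rule degree_add_le) auto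
  then show ?thesis
    by (simp add: skew_mult_bound[of _ ?n] sum.distrib distrib_right add_monom[symmetric])
qed

lemma skew_mult_monom: "skew_mult \<sigma> (monom p n) R = monom p n * map_poly (\<sigma> ^^ n) R"
proof -
  have "skew_mult \<sigma> (monom p n) R = (\<Sum>i\<le>n. monom (coeff (monom p n) i) i * map_poly (\<sigma> ^^ i) R)"
    by (rule skew_mult_bound) (simp add: degree_monom_le)
  also have "\<dots> = (\<Sum>i\<le>n. if n = i then monom p n * map_poly (\<sigma> ^^ n) R else 0)"
    by (rule sum.cong) (auto simp: coeff_monom)
  finally show ?thesis by simp
qed

lemma skew_eval_right_lin_dvd: "right_lin_dvd \<sigma> b P \<Longrightarrow> skew_eval b P = 0"
  unfolding right_lin_dvd_def
  by (auto simp: skew_eval_skew_mult skew_eval_lin field_aut_0[OF funpow_aut])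

lemma degree_sub_skew_mult_lin:
  assumes "degree P \<le> Suc n"
  shows "degree (P - skew_mult \<sigma> (monom (coeff P (Suc n)) n) [:- b, 1:]) \<le> n"
proof -
  let ?p = "coeff P (Suc n)"
  have S: "skew_mult \<sigma> (monom ?p n) [:- b, 1:] = monom ?p n * [:- (\<sigma> ^^ n) b, 1:]"
    by (simp add: skew_mult_monom map_poly_pCons field_aut_uminus[OF funpow_aut]
        field_aut_1[OF funpow_aut] field_aut_0[OF funpow_aut])
  show ?thesis
  proof (rule degree_le, intro allI impI)
    fix i assume "n < i"
    then consider "i = Suc n" | "Suc n < i" by linarith
    then show "coeff (P - skew_mult \<sigma> (monom ?p n) [:- b, 1:]) i = 0"
      by cases (use assms in \<open>auto simp: S coeff_monom_mult coeff_eq_0 coeff_pCons split: nat.splits\<close>)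
  qed
qed

lemma right_lin_dvd_if_skew_eval_0:
  "degree P \<le> n \<Longrightarrow> skew_eval b P = 0 \<Longrightarrow> right_lin_dvd \<sigma> b P"
proof (induct n arbitrary: P)
  case 0
  then have "coeff P 0 = 0" by (simp add: skew_eval_def)
  with \<open>degree P \<le> 0\<close> have "P = 0" by (metis coeff_eq_0 gr0I leading_coeff_0_iff le_zero_eq)
  then show ?case unfolding right_lin_dvd_def by (intro exI[of _ 0]) (simp add: skew_mult_def)
next
  case (Suc n)
  define p where "p = coeff P (Suc n)"
  define S where "S = skew_mult \<sigma> (monom p n) [:- b, 1:]"
  have "skew_eval b S = 0"
    unfolding S_def by (rule skew_eval_right_lin_dvd) (auto simp: right_lin_dvd_def)
  then have "right_lin_dvd \<sigma> b (P - S)"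
    using Suc degree_sub_skew_mult_lin[OF Suc.prems(1)] unfolding S_def p_def by (simp add: skew_eval_diff)
  then obtain Q where "P - S = skew_mult \<sigma> Q [:- b, 1:]" unfolding right_lin_dvd_def by blast
  then have "P = skew_mult \<sigma> (Q + monom p n) [:- b, 1:]"
    by (simp add: skew_mult_add_left S_def[symmetric] algebra_simps)
  then show ?case unfolding right_lin_dvd_def by blast
qed

lemma right_lin_dvd_iff_skew_eval: "right_lin_dvd \<sigma> b P \<longleftrightarrow> skew_eval b P = 0"
  using skew_eval_right_lin_dvd right_lin_dvd_if_skew_eval_0 by blast

definition P_eval :: "'a list \<Rightarrow> 'a \<Rightarrow> 'a" where
  "P_eval as b = skew_eval b (P_seq \<sigma> as)"

lemma P_eval_Nil [simp]: "P_eval [] b = 1"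
  by (simp add: P_eval_def P_seq_def skew_eval_def)

lemma P_eval_snoc: "P_eval (as @ [c]) b = \<sigma> (P_eval as b) * b - c * P_eval as b"
  by (simp add: P_eval_def P_seq_def skew_eval_skew_mult algebra_simps trunc_norm_def)

lemma mult_seq_iff_P_eval: "mult_seq \<sigma> as \<longleftrightarrow> (\<forall>b. P_eval as b = 0 \<longleftrightarrow> b = hd as)"
  unfolding mult_seq_def right_lin_dvd_iff_skew_eval P_eval_def ..

lemma P_eval_snoc_eq_0: "P_eval as b = 0 \<Longrightarrow> P_eval (as @ [c]) b = 0"
  by (simp add: P_eval_snoc field_aut_0[OF aut])

lemma P_eval_hd: "as \<noteq> [] \<Longrightarrow> P_eval as (hd as) = 0"
proof (induct as rule: rev_induct)
  case (snoc c as)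
  show ?case
  proof (cases "as = []")
    case True
    then show ?thesis using P_eval_snoc[of "[]" c c] by (simp add: field_aut_1[OF aut])
  next
    case False
    then show ?thesis using snoc P_eval_snoc_eq_0 by simp
  qed
qed simp

lemma P_eval_0_nonzero: "(\<forall>a\<in>set as. a \<noteq> 0) \<Longrightarrow> P_eval as 0 \<noteq> 0"
  by (induct as rule: rev_induct) (simp_all add: P_eval_snoc)

lemma mult_seq_snoc:
  assumes "bs \<noteq> []"
  shows "mult_seq \<sigma> (bs @ [c]) \<longleftrightarrow>
           mult_seq \<sigma> bs \<and> \<not> (\<exists>b. P_eval bs b \<noteq> 0 \<and> P_eval (bs @ [c]) b = 0)"
  using assms P_eval_hd[OF assms] P_eval_snoc_eq_0[of bs _ c] unfolding mult_seq_iff_P_eval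
  by (simp (no_asm_simp)) (metis (mono_tags))

text \<open>Unlike b \<mapsto> P_eval bs b, this is additive in x; via P_eval_conj it linearises the search
  for roots of P_(bs @ [c]) among the \<sigma>-conjugates of c.\<close>
definition conj_eval :: "'a list \<Rightarrow> 'a \<Rightarrow> 'a \<Rightarrow> 'a" where
  "conj_eval as c x = foldl (\<lambda>g a. \<sigma> g * c - a * g) x as"

lemma conj_eval_Nil [simp]: "conj_eval [] c x = x"
  by (simp add: conj_eval_def)

lemma conj_eval_snoc: "conj_eval (as @ [a]) c x = \<sigma> (conj_eval as c x) * c - a * conj_eval as c x"
  by (simp add: conj_eval_def)

lemma conj_eval_0: "conj_eval as c 0 = 0"
  by (induct as rule: rev_induct) (simp_all add: conj_eval_snoc field_aut_0[OF aut])

lemma P_eval_conj: "x \<noteq> 0 \<Longrightarrow> P_eval as (\<sigma> x * c / x) * x = conj_eval as c x"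
proof (induct as rule: rev_induct)
  case (snoc a as)
  then have "\<sigma> (P_eval as (\<sigma> x * c / x)) * \<sigma> x = \<sigma> (conj_eval as c x)"
    by (simp add: field_aut_mult[OF aut, symmetric])
  with snoc show ?case by (simp add: P_eval_snoc conj_eval_snoc field_simps)
qed simp

lemma new_root_iff_conj_eval:
  assumes "c \<noteq> 0"
  shows "(\<exists>b. P_eval bs b \<noteq> 0 \<and> P_eval (bs @ [c]) b = 0) \<longleftrightarrow> 1 \<in> range (conj_eval bs c)"
proof
  assume "\<exists>b. P_eval bs b \<noteq> 0 \<and> P_eval (bs @ [c]) b = 0"
  then obtain b where f: "P_eval bs b \<noteq> 0" and e: "\<sigma> (P_eval bs b) * b = c * P_eval bs b"
    by (auto simp: P_eval_snoc)
  define x where "x = inverse (P_eval bs b)"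
  have "\<sigma> (P_eval bs b) \<noteq> 0" using f field_aut_eq_0_iff[OF aut] by simp
  have "\<sigma> x * c / x = c * P_eval bs b / \<sigma> (P_eval bs b)"
    unfolding x_def by (simp add: field_aut_inverse[OF aut] divide_inverse ac_simps)
  also have "\<dots> = b" using e \<open>\<sigma> (P_eval bs b) \<noteq> 0\<close> by (simp add: field_simps)
  finally have "conj_eval bs c x = 1"
    using P_eval_conj[of x bs c] f unfolding x_def by simp
  then show "1 \<in> range (conj_eval bs c)" by (metis rangeI)
next
  assume "1 \<in> range (conj_eval bs c)"
  then obtain x where g: "conj_eval bs c x = 1" by (metis rangeE)
  then have x0: "x \<noteq> 0" using conj_eval_0 by (metis zero_neq_one)
  define b where "b = \<sigma> x * c / x"
  have fb: "P_eval bs b = inverse x"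
    using P_eval_conj[OF x0, of bs c] g x0 unfolding b_def by (simp add: field_simps)
  have "\<sigma> x \<noteq> 0" using x0 field_aut_eq_0_iff[OF aut] by simp
  have "P_eval (bs @ [c]) b = inverse (\<sigma> x) * b - c * inverse x"
    by (simp add: P_eval_snoc fb field_aut_inverse[OF aut])
  also have "\<dots> = 0" unfolding b_def using x0 \<open>\<sigma> x \<noteq> 0\<close> by (simp add: field_simps)
  finally show "\<exists>b. P_eval bs b \<noteq> 0 \<and> P_eval (bs @ [c]) b = 0"
    using fb x0 by (intro exI[of _ b]) simp
qed

lemma conj_eval_surj:
  assumes "\<forall>a\<in>set bs. surj (\<lambda>g. \<sigma> g * c - a * g)"
  shows "surj (conj_eval bs c)"
proof -
  have "\<exists>x. conj_eval bs c x = z" for z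
    using assms
  proof (induct bs arbitrary: z rule: rev_induct)
    case (snoc a bs)
    obtain g where g: "\<sigma> g * c - a * g = z"
      using snoc.prems unfolding surj_def by (metis in_set_conv_decomp)
    obtain x where "conj_eval bs c x = g" using snoc by (metis Un_iff set_append)
    with g show ?case by (auto simp: conj_eval_snoc)
  qed simp
  then show ?thesis by (metis surjI)
qed

lemma new_root_iff_zero_prefix:
  assumes "bs \<noteq> []" and "\<forall>a\<in>set bs. a = 0"
  shows "(\<exists>b. P_eval bs b \<noteq> 0 \<and> P_eval (bs @ [c]) b = 0) \<longleftrightarrow> c \<noteq> 0"
proof
  assume "\<exists>b. P_eval bs b \<noteq> 0 \<and> P_eval (bs @ [c]) b = 0"
  then obtain b where b: "P_eval bs b \<noteq> 0" "\<sigma> (P_eval bs b) * b = c * P_eval bs b"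
    by (auto simp: P_eval_snoc)
  have "hd bs = 0" using assms hd_in_set by blast
  then have "P_eval bs 0 = 0" using P_eval_hd[OF assms(1)] by simp
  then have "b \<noteq> 0" using b(1) by auto
  moreover have "\<sigma> (P_eval bs b) \<noteq> 0" using b(1) field_aut_eq_0_iff[OF aut] by simp
  ultimately show "c \<noteq> 0" using b by auto
next
  assume c: "c \<noteq> 0"
  have "surj (\<lambda>g. \<sigma> g * c)" unfolding surj_def
  proof
    fix z
    obtain g where "z / c = \<sigma> g" using field_aut_surj[OF aut] by (metis surjD)
    then show "\<exists>g. z = \<sigma> g * c" using c by (metis nonzero_eq_divide_eq)
  qed
  then have "surj (conj_eval bs c)" using assms(2) by (intro conj_eval_surj) auto
  then show "\<exists>b. P_eval bs b \<noteq> 0 \<and> P_eval (bs @ [c]) b = 0"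
    using new_root_iff_conj_eval[OF c] by simp
qed

definition sigma_conjugate :: "'a \<Rightarrow> 'a \<Rightarrow> bool" where
  "sigma_conjugate a c \<longleftrightarrow> (\<exists>\<beta>. \<beta> \<noteq> 0 \<and> c = \<sigma> \<beta> * inverse \<beta> * a)"

lemma sigma_conjugate_refl: "sigma_conjugate a a"
  unfolding sigma_conjugate_def by (intro exI[of _ 1]) (simp add: field_aut_1[OF aut])

lemma sigma_conjugate_trans:
  assumes "sigma_conjugate a b" and "sigma_conjugate b c"
  shows "sigma_conjugate a c"
proof -
  obtain \<beta> \<gamma> where "\<beta> \<noteq> 0" "b = \<sigma> \<beta> * inverse \<beta> * a" "\<gamma> \<noteq> 0" "c = \<sigma> \<gamma> * inverse \<gamma> * b"
    using assms unfolding sigma_conjugate_def by blast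
  then show ?thesis unfolding sigma_conjugate_def
    by (intro exI[of _ "\<gamma> * \<beta>"]) (simp add: field_aut_mult[OF aut] ac_simps)
qed

lemma sigma_conjugate_sym:
  assumes "sigma_conjugate a c"
  shows "sigma_conjugate c a"
proof -
  obtain \<beta> where "\<beta> \<noteq> 0" "c = \<sigma> \<beta> * inverse \<beta> * a"
    using assms unfolding sigma_conjugate_def by blast
  moreover have "\<sigma> \<beta> \<noteq> 0" using \<open>\<beta> \<noteq> 0\<close> field_aut_eq_0_iff[OF aut] by simp
  ultimately show ?thesis unfolding sigma_conjugate_def
    by (intro exI[of _ "inverse \<beta>"]) (simp add: field_aut_inverse[OF aut] field_aut_divide[OF aut] field_aut_1[OF aut] field_simps)
qed

lemma sigma_conjugate_eq_0_iff: "sigma_conjugate a c \<Longrightarrow> c = 0 \<longleftrightarrow> a = 0"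
  unfolding sigma_conjugate_def by (auto simp: field_aut_eq_0_iff[OF aut])

end

locale finite_order_automorphism = field_automorphism +
  fixes m :: nat
  assumes order: "aut_order \<sigma> m"
begin

abbreviation T :: "'a \<Rightarrow> 'a" where
  "T \<equiv> trace_aut \<sigma> m"

lemma order_pos: "0 < m"
  using order by (simp add: aut_order_def)

lemma funpow_order: "(\<sigma> ^^ m) x = x"
  using order by (simp add: aut_order_def)

lemma trace_sigma: "\<sigma> (T x) = T x"
proof -
  have "\<sigma> (T x) = (\<Sum>i<m. (\<sigma> ^^ Suc i) x)"
    unfolding trace_aut_def by (simp add: field_aut_sum[OF aut])
  also have "\<dots> = T x"
    unfolding trace_aut_def by (rule sum_lessThan_Suc_shift_cyclic) (simp add: funpow_order)
  finally show ?thesis .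
qed

lemma trace_0 [simp]: "T 0 = 0"
  unfolding trace_aut_def by (simp add: field_aut_0[OF funpow_aut])

lemma funpow_fixed: "\<sigma> k = k \<Longrightarrow> (\<sigma> ^^ i) k = k"
  by (induct i) simp_all

lemma trace_add: "T (x + y) = T x + T y"
  unfolding trace_aut_def by (simp add: field_aut_add[OF funpow_aut] sum.distrib)

lemma trace_diff: "T (x - y) = T x - T y"
  unfolding trace_aut_def by (simp add: field_aut_diff[OF funpow_aut] sum_subtractf)

lemma trace_mult_fixed: "\<sigma> k = k \<Longrightarrow> T (k * x) = k * T x"
  unfolding trace_aut_def by (simp add: field_aut_mult[OF funpow_aut] funpow_fixed sum_distrib_left)

lemma trace_sigma_minus_self: "T (\<sigma> x - x) = 0"
proof -
  have "T (\<sigma> x) = T x"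
    unfolding trace_aut_def
    using sum_lessThan_Suc_shift_cyclic[where g = "\<lambda>i. (\<sigma> ^^ i) x"]
    by (simp add: funpow_order funpow_swap1)
  then show ?thesis by (simp add: trace_diff)
qed

lemma funpow_distinct:
  assumes "i < k" and "k < m"
  shows "\<exists>s. (\<sigma> ^^ i) s \<noteq> (\<sigma> ^^ k) s"
proof (rule ccontr)
  assume "\<not> ?thesis"
  then have eq: "(\<sigma> ^^ i) s = (\<sigma> ^^ k) s" for s by blast
  have "\<sigma> ^^ (k - i) = id"
  proof
    fix y
    obtain s where y: "y = (\<sigma> ^^ i) s" using field_aut_surj[OF funpow_aut] by (metis surjD)
    have "(\<sigma> ^^ (k - i)) y = (\<sigma> ^^ (k - i + i)) s" unfolding y funpow_add by simp
    then show "(\<sigma> ^^ (k - i)) y = id y" using assms eq y by simp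
  qed
  moreover have "0 < k - i" "k - i < m" using assms by auto
  ultimately show False using order unfolding aut_order_def by blast
qed

lemma funpow_independent:
  assumes "finite S" and "S \<subseteq> {..<m}" and "\<forall>t. (\<Sum>i\<in>S. c i * (\<sigma> ^^ i) t) = 0" and "i \<in> S"
  shows "c i = 0"
  using assms
proof (induct S arbitrary: c i rule: finite_induct)
  case (insert k S)
  have H: "c k * (\<sigma> ^^ k) t + (\<Sum>i\<in>S. c i * (\<sigma> ^^ i) t) = 0" for t
    using insert.hyps insert.prems(2) by simp
  have Sm: "S \<subseteq> {..<m}" and km: "k < m" using insert.prems(1) by auto
  have cS: "c j = 0" if j: "j \<in> S" for j
  proof -
    have "j \<noteq> k" using j insert.hyps(2) by auto
    then obtain s where s: "(\<sigma> ^^ j) s \<noteq> (\<sigma> ^^ k) s"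
      using funpow_distinct km j Sm by (metis lessThan_iff linorder_neqE_nat subsetD)
    txt \<open>Subtracting \<sigma>^k(s) times the relation at t from the relation at s t kills the k-th term.\<close>
    have "(\<Sum>i\<in>S. (c i * ((\<sigma> ^^ i) s - (\<sigma> ^^ k) s)) * (\<sigma> ^^ i) t) = 0" for t
    proof -
      have "(\<Sum>i\<in>S. (c i * ((\<sigma> ^^ i) s - (\<sigma> ^^ k) s)) * (\<sigma> ^^ i) t)
          = (c k * (\<sigma> ^^ k) (s * t) + (\<Sum>i\<in>S. c i * (\<sigma> ^^ i) (s * t)))
            - (\<sigma> ^^ k) s * (c k * (\<sigma> ^^ k) t + (\<Sum>i\<in>S. c i * (\<sigma> ^^ i) t))"
        by (simp add: field_aut_mult[OF funpow_aut] algebra_simps sum_subtractf sum_distrib_left)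
      then show ?thesis using H by simp
    qed
    then have "c j * ((\<sigma> ^^ j) s - (\<sigma> ^^ k) s) = 0"
      using insert.hyps(3)[where c = "\<lambda>i. c i * ((\<sigma> ^^ i) s - (\<sigma> ^^ k) s)", OF Sm _ j] by blast
    then show ?thesis using s by simp
  qed
  show ?case
  proof (cases "i = k")
    case True
    then show ?thesis using H[of 1] cS by (simp add: field_aut_1[OF funpow_aut])
  next
    case False
    then show ?thesis using insert.prems(3) cS by auto
  qed
qed simp

lemma exists_funpow_sum_nonzero:
  assumes "c 0 \<noteq> 0"
  shows "\<exists>t. (\<Sum>i<m. c i * (\<sigma> ^^ i) t) \<noteq> 0"
  using funpow_independent[of "{..<m}" c 0] assms order_pos by auto

lemma trunc_norm_order_sigma: "\<sigma> (trunc_norm m w) = trunc_norm m w"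
proof (cases "w = 0")
  case True
  then have "trunc_norm m w = 0"
    using order_pos unfolding trunc_norm_def by (auto intro: bexI[of _ 0])
  then show ?thesis by (simp add: field_aut_0[OF aut])
next
  case False
  have "w * \<sigma> (trunc_norm m w) = trunc_norm (Suc m) w"
    by (rule trunc_norm_Suc_left[symmetric])
  also have "\<dots> = w * trunc_norm m w"
    by (simp add: trunc_norm_Suc funpow_order mult.commute)
  finally show ?thesis using False by simp
qed

text \<open>Hilbert's resolvent. It yields multiplicative Hilbert 90 when trunc_norm m w = 1, and surjectivity
  of x \<mapsto> w \<sigma>(x) - x otherwise.\<close>
lemma sigma_resolvent:
  "w * \<sigma> (\<Sum>i<m. trunc_norm i w * (\<sigma> ^^ i) t)
     = (\<Sum>i<m. trunc_norm i w * (\<sigma> ^^ i) t) + (trunc_norm m w - 1) * t"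
proof -
  have "w * \<sigma> (\<Sum>i<m. trunc_norm i w * (\<sigma> ^^ i) t)
      = (\<Sum>i<m. trunc_norm (Suc i) w * (\<sigma> ^^ Suc i) t)"
    by (simp add: field_aut_sum[OF aut] field_aut_mult[OF aut] trunc_norm_Suc_left
        sum_distrib_left ac_simps)
  also have "\<dots> = (\<Sum>i<m. trunc_norm i w * (\<sigma> ^^ i) t) + (trunc_norm m w - 1) * t"
    using sum_lessThan_Suc_shift_eq[of "\<lambda>i. trunc_norm i w * (\<sigma> ^^ i) t" m]
    by (simp add: funpow_order algebra_simps)
  finally show ?thesis .
qed

lemma hilbert90_mult:
  assumes "trunc_norm m w = 1"
  shows "\<exists>\<beta>. \<beta> \<noteq> 0 \<and> w = \<sigma> \<beta> * inverse \<beta>"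
proof -
  obtain t where y: "(\<Sum>i<m. trunc_norm i w * (\<sigma> ^^ i) t) \<noteq> 0"
    using exists_funpow_sum_nonzero[of "\<lambda>i. trunc_norm i w"] by auto
  define y where "y = (\<Sum>i<m. trunc_norm i w * (\<sigma> ^^ i) t)"
  have "w * \<sigma> y = y" using sigma_resolvent[of w t] assms unfolding y_def by simp
  moreover have "y \<noteq> 0" "\<sigma> y \<noteq> 0" using y field_aut_eq_0_iff[OF aut] unfolding y_def by auto
  ultimately have "w = \<sigma> (inverse y) * inverse (inverse y)"
    by (simp add: field_aut_inverse[OF aut] field_aut_divide[OF aut] field_aut_1[OF aut] field_simps)
  then show ?thesis using \<open>y \<noteq> 0\<close> by (intro exI[of _ "inverse y"]) simp
qed

lemma surj_twisted_sigma_minus_id: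
  assumes "trunc_norm m w \<noteq> 1"
  shows "surj (\<lambda>x. w * \<sigma> x - x)"
  unfolding surj_def
proof
  fix z
  define S where "S = (\<Sum>i<m. trunc_norm i w * (\<sigma> ^^ i) z)"
  define k where "k = inverse (trunc_norm m w - 1)"
  have "\<sigma> k = k"
    unfolding k_def by (simp add: field_aut_inverse[OF aut] field_aut_diff[OF aut]
        field_aut_1[OF aut] trunc_norm_order_sigma)
  then have "w * \<sigma> (k * S) - k * S = k * (w * \<sigma> S - S)"
    by (simp add: field_aut_mult[OF aut] algebra_simps)
  also have "\<dots> = z"
    using sigma_resolvent[of w z] assms unfolding S_def k_def by simp
  finally show "\<exists>x. z = w * \<sigma> x - x" by (intro exI[of _ "k * S"]) simp
qed

lemma hilbert90_add:
  assumes "T h = 0"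
  shows "\<exists>x. \<sigma> x - x = h"
proof -
  obtain t where "(\<Sum>i<m. 1 * (\<sigma> ^^ i) t) \<noteq> 0"
    using exists_funpow_sum_nonzero[of "\<lambda>i. 1"] by auto
  then have Tt: "T t \<noteq> 0" by (simp add: trace_aut_def)
  define H where "H i = (\<Sum>j<i. (\<sigma> ^^ j) h)" for i
  have sH: "\<sigma> (H i) = H (Suc i) - h" for i
    unfolding H_def sum.lessThan_Suc_shift by (simp add: field_aut_sum[OF aut])
  define y where "y = (\<Sum>i<m. H i * (\<sigma> ^^ i) t)"
  have "\<sigma> y = (\<Sum>i<m. H (Suc i) * (\<sigma> ^^ Suc i) t) - h * (\<Sum>i<m. (\<sigma> ^^ Suc i) t)"
    unfolding y_def
    by (simp add: field_aut_sum[OF aut] field_aut_mult[OF aut] sH algebra_simps sum_subtractf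
        sum_distrib_left)
  also have "(\<Sum>i<m. H (Suc i) * (\<sigma> ^^ Suc i) t) = y"
    unfolding y_def by (rule sum_lessThan_Suc_shift_cyclic) (simp add: H_def assms[unfolded trace_aut_def])
  also have "(\<Sum>i<m. (\<sigma> ^^ Suc i) t) = T t"
    unfolding trace_aut_def by (rule sum_lessThan_Suc_shift_cyclic) (simp add: funpow_order)
  finally have "\<sigma> y = y - h * T t" .
  then have "\<sigma> (- y / T t) - (- y / T t) = h"
    using Tt by (simp add: field_aut_divide[OF aut] field_aut_uminus[OF aut] trace_sigma field_simps)
  then show ?thesis by blast
qed

lemma sigma_minus_id_eq_iff_trace: "(\<exists>x. \<sigma> x - x = z) \<longleftrightarrow> T z = 0"
  using hilbert90_add trace_sigma_minus_self by blast

lemma surj_sigma_semilinear: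
  assumes "a \<noteq> 0" and "\<not> sigma_conjugate a c"
  shows "surj (\<lambda>g. \<sigma> g * c - a * g)"
proof -
  have "trunc_norm m (c / a) \<noteq> 1"
  proof
    assume "trunc_norm m (c / a) = 1"
    then obtain \<beta> where "\<beta> \<noteq> 0" "c / a = \<sigma> \<beta> * inverse \<beta>" using hilbert90_mult by blast
    moreover have "c = c / a * a" using assms(1) by simp
    ultimately show False using assms(2) unfolding sigma_conjugate_def by metis
  qed
  then have surj: "surj (\<lambda>x. c / a * \<sigma> x - x)" by (rule surj_twisted_sigma_minus_id)
  show ?thesis unfolding surj_def
  proof
    fix z
    obtain x where "z / a = c / a * \<sigma> x - x" using surjD[OF surj, of "z / a"] by blast
    then show "\<exists>g. z = \<sigma> g * c - a * g"
      using assms(1) by (intro exI[of _ x]) (simp add: field_simps)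
  qed
qed

definition mult_step :: "'a \<Rightarrow> 'a \<Rightarrow> bool" where
  "mult_step a c \<longleftrightarrow> (\<exists>\<beta>. \<beta> \<noteq> 0 \<and> c = \<sigma> \<beta> * inverse \<beta> * a \<and> T (\<beta> * inverse a) \<noteq> 0)"

lemma mult_step_sigma_conjugate: "mult_step a c \<Longrightarrow> sigma_conjugate a c"
  unfolding mult_step_def sigma_conjugate_def by blast

lemma mult_step_self: "mult_step a a \<longleftrightarrow> T (inverse a) \<noteq> 0"
proof
  assume "mult_step a a"
  then obtain \<beta> where \<beta>: "\<beta> \<noteq> 0" "a = \<sigma> \<beta> * inverse \<beta> * a" "T (\<beta> * inverse a) \<noteq> 0"
    unfolding mult_step_def by blast
  then have "a \<noteq> 0" by auto
  with \<beta> have "\<sigma> \<beta> = \<beta>" by (simp add: field_simps)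
  then show "T (inverse a) \<noteq> 0" using \<beta> by (simp add: trace_mult_fixed)
next
  assume "T (inverse a) \<noteq> 0"
  then show "mult_step a a"
    unfolding mult_step_def by (intro exI[of _ 1]) (simp add: field_aut_1[OF aut])
qed

lemma successively_mult_step_conjugate_last:
  "successively mult_step as \<Longrightarrow> a \<in> set as \<Longrightarrow> sigma_conjugate a (last as)"
proof (induct as arbitrary: a)
  case (Cons x xs)
  show ?case
  proof (cases "xs = []")
    case True
    then show ?thesis using Cons.prems by (simp add: sigma_conjugate_refl)
  next
    case False
    then have "mult_step x (hd xs)" "successively mult_step xs"
      using Cons.prems(1) by (auto simp: successively_Cons)
    moreover have "sigma_conjugate (hd xs) (last xs)"
      using Cons.hyps False \<open>successively mult_step xs\<close> by simp
    ultimately show ?thesis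
      using Cons False by (auto intro: sigma_conjugate_trans mult_step_sigma_conjugate)
  qed
qed simp

lemma successively_mult_step_nonzero:
  assumes "as \<noteq> []" and "hd as \<noteq> 0" and "successively mult_step as" and "a \<in> set as"
  shows "a \<noteq> 0"
proof -
  have "last as \<noteq> 0"
    using successively_mult_step_conjugate_last[OF assms(3) hd_in_set[OF assms(1)]] assms(2)
    by (simp add: sigma_conjugate_eq_0_iff)
  then show ?thesis
    using successively_mult_step_conjugate_last[OF assms(3,4)] by (simp add: sigma_conjugate_eq_0_iff)
qed

lemma sigma_minus_id_on_trace_kernel:
  assumes "T u \<noteq> 0"
  shows "(\<exists>w. T (w * u) = 0 \<and> \<sigma> w - w = h) \<longleftrightarrow> T h = 0"
proof
  assume "T h = 0"
  then obtain w0 where w0: "\<sigma> w0 - w0 = h" using hilbert90_add by blast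
  txt \<open>Correct w0 by a constant of the fixed field to land in the kernel of T(_ * u).\<close>
  define k where "k = - T (w0 * u) / T u"
  have "\<sigma> k = k"
    unfolding k_def by (simp add: field_aut_divide[OF aut] field_aut_uminus[OF aut] trace_sigma)
  have "T ((w0 + k) * u) = T (w0 * u) + k * T u"
    by (simp add: distrib_right trace_add trace_mult_fixed[OF \<open>\<sigma> k = k\<close>])
  then have "T ((w0 + k) * u) = 0" using assms by (simp add: k_def)
  moreover have "\<sigma> (w0 + k) - (w0 + k) = h"
    using w0 \<open>\<sigma> k = k\<close> by (simp add: field_aut_add[OF aut])
  ultimately show "\<exists>w. T (w * u) = 0 \<and> \<sigma> w - w = h" by blast
qed (use trace_sigma_minus_self in blast)

lemma sigma_twist_identity:
  "\<delta> \<noteq> 0 \<Longrightarrow> \<sigma> g * (\<sigma> \<delta> * inverse \<delta> * a) - a * g = a * inverse \<delta> * (\<sigma> (g * \<delta>) - g * \<delta>)"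
  by (simp add: field_aut_mult[OF aut] field_simps)

lemma conj_eval_snoc_eq_iff:
  assumes "\<delta> \<noteq> 0" and "c \<noteq> 0"
  shows "(\<exists>x. conj_eval (bs @ [c]) (\<sigma> \<delta> * inverse \<delta> * c) x = z) \<longleftrightarrow>
           (\<exists>w. (\<exists>x. conj_eval bs (\<sigma> \<delta> * inverse \<delta> * c) x = w * inverse \<delta>)
                 \<and> \<sigma> w - w = z * \<delta> * inverse c)"
proof -
  let ?g = "conj_eval bs (\<sigma> \<delta> * inverse \<delta> * c)"
  have "conj_eval (bs @ [c]) (\<sigma> \<delta> * inverse \<delta> * c) x = c * inverse \<delta> * (\<sigma> (?g x * \<delta>) - ?g x * \<delta>)"
    for x using assms(1) by (simp add: conj_eval_snoc sigma_twist_identity)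
  moreover have "c * inverse \<delta> * D = z \<longleftrightarrow> D = z * \<delta> * inverse c" for D
    using assms by (auto simp: field_simps)
  moreover have "y * \<delta> * inverse \<delta> = y" "y * inverse \<delta> * \<delta> = y" for y
    using assms(1) by simp_all
  ultimately show ?thesis by metis
qed

lemma conj_eval_range_chain:
  assumes "as \<noteq> []" and "hd as \<noteq> 0" and "successively mult_step as" and "\<delta> \<noteq> 0"
  shows "(\<exists>x. conj_eval as (\<sigma> \<delta> * inverse \<delta> * last as) x = z) \<longleftrightarrow>
           T (z * \<delta> * inverse (last as)) = 0"
  using assms
proof (induct as arbitrary: \<delta> z rule: rev_induct)
  case (snoc c bs)
  have c0: "c \<noteq> 0"
    using successively_mult_step_nonzero[OF _ snoc.prems(2,3)] by simp
  show ?case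
  proof (cases "bs = []")
    case True
    show ?thesis
      using conj_eval_snoc_eq_iff[OF snoc.prems(4) c0, of bs z] True
      by (simp add: sigma_minus_id_eq_iff_trace)
  next
    case False
    have chain: "successively mult_step bs" "mult_step (last bs) c"
      using snoc.prems(3) False by (simp_all add: successively_append_iff)
    then obtain \<beta> where \<beta>: "\<beta> \<noteq> 0" "c = \<sigma> \<beta> * inverse \<beta> * last bs" "T (\<beta> * inverse (last bs)) \<noteq> 0"
      unfolding mult_step_def by blast
    have "last bs \<noteq> 0" using \<beta>(2) c0 by auto
    have conj: "\<sigma> \<delta> * inverse \<delta> * c = \<sigma> (\<delta> * \<beta>) * inverse (\<delta> * \<beta>) * last bs"
      using \<beta>(2) by (simp add: field_aut_mult[OF aut] ac_simps)
    have "hd bs \<noteq> 0" "\<delta> * \<beta> \<noteq> 0" using snoc.prems(2,4) False \<beta>(1) by simp_all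
    then have IH: "(\<exists>x. conj_eval bs (\<sigma> \<delta> * inverse \<delta> * c) x = y) \<longleftrightarrow>
                   T (y * (\<delta> * \<beta>) * inverse (last bs)) = 0" for y
      unfolding conj by (rule snoc.hyps[OF False _ chain(1)])
    have "(\<exists>x. conj_eval (bs @ [c]) (\<sigma> \<delta> * inverse \<delta> * c) x = z) \<longleftrightarrow>
          (\<exists>w. T (w * (\<beta> * inverse (last bs))) = 0 \<and> \<sigma> w - w = z * \<delta> * inverse c)"
      unfolding conj_eval_snoc_eq_iff[OF snoc.prems(4) c0] IH using snoc.prems(4)
      by (simp add: ac_simps)
    also have "\<dots> \<longleftrightarrow> T (z * \<delta> * inverse c) = 0"
      by (rule sigma_minus_id_on_trace_kernel) (use \<beta>(3) in simp)
    finally show ?thesis by simp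
  qed
qed simp

lemma new_root_iff_not_mult_step:
  assumes "bs \<noteq> []" and "hd bs \<noteq> 0" and "successively mult_step bs"
  shows "(\<exists>b. P_eval bs b \<noteq> 0 \<and> P_eval (bs @ [c]) b = 0) \<longleftrightarrow> \<not> mult_step (last bs) c"
proof -
  have nonzero: "\<forall>a\<in>set bs. a \<noteq> 0" using successively_mult_step_nonzero[OF assms] by blast
  then have "last bs \<noteq> 0" using assms(1) by simp
  consider "c = 0" | "c \<noteq> 0" "sigma_conjugate (last bs) c" | "c \<noteq> 0" "\<not> sigma_conjugate (last bs) c"
    by blast
  then show ?thesis
  proof cases
    case 1
    then have "P_eval (bs @ [c]) 0 = 0" by (simp add: P_eval_snoc)
    moreover have "\<not> mult_step (last bs) c"
      using 1 \<open>last bs \<noteq> 0\<close> mult_step_sigma_conjugate sigma_conjugate_eq_0_iff by blast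
    ultimately show ?thesis using P_eval_0_nonzero[OF nonzero] by blast
  next
    case 2
    then obtain \<beta> where \<beta>: "\<beta> \<noteq> 0" "c = \<sigma> \<beta> * inverse \<beta> * last bs"
      unfolding sigma_conjugate_def by blast
    then have "1 \<in> range (conj_eval bs c) \<longleftrightarrow> T (\<beta> * inverse (last bs)) = 0"
      using conj_eval_range_chain[OF assms \<beta>(1), of 1] by (simp add: image_iff eq_commute[of 1])
    also have "\<dots> \<longleftrightarrow> \<not> mult_step (last bs) c"
    proof
      assume "T (\<beta> * inverse (last bs)) = 0"
      txt \<open>The trace condition does not depend on the choice of \<beta>: two choices differ by a
        factor in the fixed field.\<close>
      show "\<not> mult_step (last bs) c"
      proof
        assume "mult_step (last bs) c"
        then obtain \<gamma> where \<gamma>: "\<gamma> \<noteq> 0" "c = \<sigma> \<gamma> * inverse \<gamma> * last bs"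
          "T (\<gamma> * inverse (last bs)) \<noteq> 0" unfolding mult_step_def by blast
        have "\<sigma> \<gamma> * inverse \<gamma> = \<sigma> \<beta> * inverse \<beta>" using \<beta>(2) \<gamma>(2) \<open>last bs \<noteq> 0\<close> by simp
        then have "\<sigma> (\<gamma> / \<beta>) = \<gamma> / \<beta>"
          using \<beta>(1) \<gamma>(1) field_aut_eq_0_iff[OF aut]
          by (simp add: field_aut_divide[OF aut] field_simps)
        then have "T (\<gamma> * inverse (last bs)) = \<gamma> / \<beta> * T (\<beta> * inverse (last bs))"
          using trace_mult_fixed[of "\<gamma> / \<beta>" "\<beta> * inverse (last bs)"] \<beta>(1) by simp
        then show False using \<gamma>(3) \<open>T (\<beta> * inverse (last bs)) = 0\<close> by simp
      qed
    qed (use \<beta> in \<open>auto simp: mult_step_def\<close>)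
    finally show ?thesis using new_root_iff_conj_eval[OF 2(1)] by simp
  next
    case 3
    have "surj (\<lambda>g. \<sigma> g * c - a * g)" if "a \<in> set bs" for a
    proof (rule surj_sigma_semilinear)
      show "a \<noteq> 0" using nonzero that by blast
      show "\<not> sigma_conjugate a c"
        using 3(2) successively_mult_step_conjugate_last[OF assms(3) that]
        by (meson sigma_conjugate_sym sigma_conjugate_trans)
    qed
    then have "surj (conj_eval bs c)" by (intro conj_eval_surj) blast
    then show ?thesis
      using new_root_iff_conj_eval[OF 3(1)] 3(2) mult_step_sigma_conjugate by auto
  qed
qed

lemma mult_seq_iff:
  "as \<noteq> [] \<Longrightarrow>
     mult_seq \<sigma> as \<longleftrightarrow> (\<forall>a\<in>set as. a = 0) \<or> (hd as \<noteq> 0 \<and> successively mult_step as)"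
proof (induct as rule: rev_induct)
  case (snoc c bs)
  show ?case
  proof (cases "bs = []")
    case True
    then show ?thesis
      using P_eval_snoc[of "[]" c] by (simp add: mult_seq_iff_P_eval field_aut_1[OF aut])
  next
    case False
    then have IH: "mult_seq \<sigma> bs \<longleftrightarrow> (\<forall>a\<in>set bs. a = 0) \<or> (hd bs \<noteq> 0 \<and> successively mult_step bs)"
      using snoc.hyps by blast
    consider "\<forall>a\<in>set bs. a = 0" | "hd bs \<noteq> 0" "successively mult_step bs"
      | "\<not> mult_seq \<sigma> bs"
      using IH by blast
    then show ?thesis
    proof cases
      case 1
      then show ?thesis
        using IH new_root_iff_zero_prefix[OF False 1] hd_in_set[OF False]
        by (auto simp: mult_seq_snoc[OF False] False)
    next
      case 2
      then show ?thesis
        using IH new_root_iff_not_mult_step[OF False 2] hd_in_set[OF False]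
        by (auto simp: mult_seq_snoc[OF False] False successively_append_iff)
    next
      case 3
      then show ?thesis
        using IH hd_in_set[OF False]
        by (auto simp: mult_seq_snoc[OF False] False successively_append_iff)
    qed
  qed
qed simp

lemma mult_seq_replicate:
  assumes "a \<noteq> 0" and "2 \<le> r"
  shows "mult_seq \<sigma> (replicate r a) \<longleftrightarrow> T (inverse a) \<noteq> 0"
proof -
  have "Suc 0 < r" using assms(2) by simp
  then have "successively mult_step (replicate r a) \<longleftrightarrow> mult_step a a"
    by (auto simp: successively_conv_nth)
  then show ?thesis
    using assms mult_seq_iff[of "replicate r a"] by (simp add: mult_step_self)
qed

end

theorem mainTheorem18:
  fixes \<sigma> :: "'a::field \<Rightarrow> 'a" and m :: nat
  assumes "field_aut \<sigma>" and "aut_order \<sigma> m"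
  shows "(\<forall>as::'a list. as \<noteq> [] \<longrightarrow>
           (mult_seq \<sigma> as \<longleftrightarrow>
             ((\<forall>i<length as. as ! i = 0) \<or>
              (as ! 0 \<noteq> 0 \<and>
               (\<forall>i. i + 1 < length as \<longrightarrow>
                  (\<exists>\<beta>. \<beta> \<noteq> 0 \<and> as ! (i + 1) = \<sigma> \<beta> * inverse \<beta> * as ! i
                       \<and> trace_aut \<sigma> m (\<beta> * inverse (as ! i)) \<noteq> 0))))))
       \<and> (\<forall>(a::'a) r. a \<noteq> 0 \<longrightarrow> 2 \<le> r \<longrightarrow>
           (mult_seq \<sigma> (replicate r a) \<longleftrightarrow> trace_aut \<sigma> m (inverse a) \<noteq> 0))"
proof -
  interpret finite_order_automorphism \<sigma> m
    using assms by unfold_locales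
  have "mult_seq \<sigma> as \<longleftrightarrow>
          (\<forall>i<length as. as ! i = 0) \<or>
          (as ! 0 \<noteq> 0 \<and> (\<forall>i. i + 1 < length as \<longrightarrow> mult_step (as ! i) (as ! (i + 1))))"
    if "as \<noteq> []" for as :: "'a list"
    using mult_seq_iff[OF that] that
    by (simp add: all_set_conv_all_nth hd_conv_nth successively_conv_nth)
  then show ?thesis
    using mult_seq_replicate unfolding mult_step_def by blast
qed

end
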